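(* For each $\lambda\in\mathbb R$ let $\mathfrak M=\mathfrak M_\lambda$ be a self-adjoint linear operator on the Hilbert space $\mathbb C^{r\times m}$ (Frobenius inner product), measurable in $\lambda$, with $\sup_{\lambda\in\mathbb R}\|\mathfrak M_\lambda\|<\infty$ and not depending on $(\mathcal A,\mathcal B,\mathcal C)$. For $\mathcal A\in\mathbb R^{N\times N}$ Hurwitz, $\mathcal B\in\mathbb R^{N\times m}$, $\mathcal C\in\mathbb R^{r\times N}$, define $$V:=\frac1{4\pi}\int_{\mathbb R}\langle F(i\lambda),\mathfrak M_\lambda(F(i\lambda))\rangle\,d\lambda .$$ Then $V$ is Fréchet differentiable with respect to $\Gamma=\begin{bmatrix}\mathcal A&\mathcal B\\ \mathcal C&0\end{bmatrix}$ (ranging over real matrices with zero bottom-right $r\times m$ block, Frobenius inner product), and $$\partial_\Gamma V=\begin{bmatrix}\partial_{\mathcal A}V&\partial_{\mathcal B}V\\ \partial_{\mathcal C}V&0\end{bmatrix}=\frac1{2\pi}\int_{\mathbb R}\mathrm{Re}\,\mathfrak P\Big(\begin{bmatrix}G(i\lambda)^*\mathcal C^T\\ I_r\end{bmatrix}\mathfrak M_\lambda(F(i\lambda))\begin{bmatrix}\mathcal B^TG(i\lambda)^*&I_m\end{bmatrix}\Big)d\lambda .$$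
   Context: $G(s):=(sI_N-\mathcal A)^{-1}$, $F(s):=\mathcal CG(s)\mathcal B$; $\langle\alpha,\beta\rangle=\mathrm{Tr}(\alpha^*\beta)$ with $(\cdot)^*$ the conjugate transpose; $\mathfrak P$ replaces the bottom-right $r\times m$ block of an $(N+r)\times(N+m)$ matrix by zero. In the paper $\mathcal A,\mathcal B,\mathcal C$ are the closed-loop matrices of a plant with a stabilizing coherent quantum controller, and $V$ is a weighted coherent quantum LQG cost. *)

theory Defs
  imports "HOL-Analysis.Analysis"
begin



definition cmat :: "real^'n^'m \<Rightarrow> complex^'n^'m" where
  "cmat X = (\<chi> i j. complex_of_real (X $ i $ j))"

definition adj :: "complex^'n^'m \<Rightarrow> complex^'m^'n" where
  "adj X = (\<chi> i j. cnj (X $ j $ i))"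

definition remat :: "complex^'n^'m \<Rightarrow> real^'n^'m" where
  "remat X = (\<chi> i j. Re (X $ i $ j))"

definition cscale :: "complex \<Rightarrow> complex^'n^'m \<Rightarrow> complex^'n^'m" where
  "cscale c X = (\<chi> i j. c * X $ i $ j)"

definition finner :: "complex^'n^'m \<Rightarrow> complex^'n^'m \<Rightarrow> complex" where
  "finner X Y = trace (adj X ** Y)"

definition hurwitz :: "real^'n^'n \<Rightarrow> bool" where
  "hurwitz A \<longleftrightarrow> (\<forall>s::complex. det (mat s - cmat A) = 0 \<longrightarrow> Re s < 0)"

definition Gtf :: "real^'n^'n \<Rightarrow> complex \<Rightarrow> complex^'n^'n" where
  "Gtf A s = matrix_inv (mat s - cmat A)"

definition Ftf :: "real^'n^'n \<Rightarrow> real^'m^'n \<Rightarrow> real^'n^'r \<Rightarrow> complex \<Rightarrow> complex^'m^'r" where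
  "Ftf A B C s = cmat C ** Gtf A s ** cmat B"

definition blk :: "'a^'n^'n \<Rightarrow> 'a^'m^'n \<Rightarrow> 'a^'n^'r \<Rightarrow> 'a^'m^'r \<Rightarrow> 'a^('n+'m)^('n+'r)" where
  "blk A B C D = (\<chi> i j. (case i of
      Inl a \<Rightarrow> (case j of Inl b \<Rightarrow> A $ a $ b | Inr b \<Rightarrow> B $ a $ b)
    | Inr a \<Rightarrow> (case j of Inl b \<Rightarrow> C $ a $ b | Inr b \<Rightarrow> D $ a $ b)))"

definition vstack :: "'a^'k^'n \<Rightarrow> 'a^'k^'r \<Rightarrow> 'a^'k^('n+'r)" where
  "vstack X Y = (\<chi> i. (case i of Inl a \<Rightarrow> X $ a | Inr b \<Rightarrow> Y $ b))"

definition hstack :: "'a^'n^'k \<Rightarrow> 'a^'m^'k \<Rightarrow> 'a^('n+'m)^'k" where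
  "hstack X Y = (\<chi> i j. (case j of Inl a \<Rightarrow> X $ i $ a | Inr b \<Rightarrow> Y $ i $ b))"

definition blkA :: "'a^('n::finite+'m::finite)^('n+'r::finite) \<Rightarrow> 'a^'n^'n" where
  "blkA G = (\<chi> i j. G $ Inl i $ Inl j)"
definition blkB :: "'a^('n::finite+'m::finite)^('n+'r::finite) \<Rightarrow> 'a^'m^'n" where
  "blkB G = (\<chi> i j. G $ Inl i $ Inr j)"
definition blkC :: "'a^('n::finite+'m::finite)^('n+'r::finite) \<Rightarrow> 'a^'n^'r" where
  "blkC G = (\<chi> i j. G $ Inr i $ Inl j)"

definition Pfrak :: "'a::zero^('n::finite+'m::finite)^('n+'r::finite) \<Rightarrow> 'a^('n+'m)^('n+'r)" where
  "Pfrak X = (\<chi> i j. (case (i, j) of (Inr _, Inr _) \<Rightarrow> 0 | _ \<Rightarrow> X $ i $ j))"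

definition zeroBR :: "(real^('n::finite+'m::finite)^('n+'r::finite)) set" where
  "zeroBR = {G. \<forall>i j. G $ Inr i $ Inr j = 0}"

text \<open>The cost V as a function of Gamma (the integrand is real for self-adjoint M).\<close>
definition Vcost :: "(real \<Rightarrow> complex^'m^'r \<Rightarrow> complex^'m^'r) \<Rightarrow> real^('n::finite+'m::finite)^('n+'r::finite) \<Rightarrow> real" where
  "Vcost M G = 1 / (4 * pi) * (LINT l|lborel.
     Re (finner (Ftf (blkA G) (blkB G) (blkC G) (\<i> * complex_of_real l))
                (M l (Ftf (blkA G) (blkB G) (blkC G) (\<i> * complex_of_real l)))))"

end

(*
  Perturb A, B, C by dA, dB, dC and let G, G' be the resolvents of A and A + dA on the imaginary
  axis. The resolvent identity G' = G + G' dA G splits the perturbed transfer function as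
  F' = F + L + R, where L = dC G B + C G dA G B + C G dB is linear and R quadratic in the
  perturbation, and each carries a factor of G. By self-adjointness of M the integrand changes by
  2 Re <L, M F> + O(|dGamma|^2 |G|^2), and moving the factors of L across the Frobenius pairing
  rewrites 2 Re <L, M F> as the inner product of Re P(...) with dGamma. Since A is Hurwitz,
  |G(i l)| <= c / (1 + |l|), so all integrands are dominated by multiples of 1 / (1 + l^2) and the
  remainder of V is O(|dGamma|^2) uniformly.
*)

theory Submission
  imports Defs "HOL-Probability.Sinc_Integral"
begin

lemma norm_sum_mult_le_L2_set:
  fixes a b :: "'i \<Rightarrow> 'a::real_normed_algebra"
  shows "norm (\<Sum>j\<in>I. a j * b j) \<le> L2_set (\<lambda>j. norm (a j)) I * L2_set (\<lambda>j. norm (b j)) I"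
proof -
  have "norm (\<Sum>j\<in>I. a j * b j) \<le> (\<Sum>j\<in>I. \<bar>norm (a j)\<bar> * \<bar>norm (b j)\<bar>)"
    by (rule order_trans[OF norm_sum sum_mono]) (simp add: norm_mult_ineq)
  also have "\<dots> \<le> L2_set (\<lambda>j. norm (a j)) I * L2_set (\<lambda>j. norm (b j)) I"
    by (rule L2_set_mult_ineq)
  finally show ?thesis .
qed

lemma norm_matrix_sq: "(norm (X::'a::real_normed_vector^'n^'m))\<^sup>2 = (\<Sum>i\<in>UNIV. \<Sum>j\<in>UNIV. (norm (X $ i $ j))\<^sup>2)"
  by (simp add: norm_vec_def L2_set_def sum_nonneg)

lemma norm_matrix_vector_mult_le:
  fixes A :: "'a::real_normed_algebra_1^'n^'m"
  shows "norm (A *v x) \<le> norm A * norm x"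
proof -
  have "norm ((A *v x) $ i) \<le> norm (A $ i) * norm x" for i
    using norm_sum_mult_le_L2_set[of "\<lambda>j. A $ i $ j" "\<lambda>j. x $ j" UNIV]
    by (simp add: matrix_vector_mult_def norm_vec_def)
  then have "norm (A *v x) \<le> L2_set (\<lambda>i. norm (A $ i) * norm x) UNIV"
    unfolding norm_vec_def[of "A *v x"] by (intro L2_set_mono) auto
  then show ?thesis
    by (simp add: norm_vec_def[of A] L2_set_left_distrib)
qed

lemma norm_matrix_mult_le:
  fixes A :: "'a::real_normed_algebra_1^'n^'m" and B :: "'a^'k^'n"
  shows "norm (A ** B) \<le> norm A * norm B"
proof -
  have "norm ((A ** B) $ i) \<le> norm (A $ i) * norm B" for i
  proof -
    have "norm ((A ** B) $ i $ k) \<le> norm (A $ i) * norm (column k B)" for k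
      using norm_sum_mult_le_L2_set[of "\<lambda>j. A $ i $ j" "\<lambda>j. B $ j $ k" UNIV]
      by (simp add: matrix_matrix_mult_def norm_vec_def column_def)
    then have "norm ((A ** B) $ i) \<le> L2_set (\<lambda>k. norm (A $ i) * norm (column k B)) UNIV"
      unfolding norm_vec_def[of "(A ** B) $ i"] by (intro L2_set_mono) auto
    also have "\<dots> = norm (A $ i) * norm B"
    proof -
      have "L2_set (\<lambda>k. norm (column k B)) UNIV = norm B"
        unfolding norm_vec_def column_def L2_set_def
        by (simp add: sum_nonneg) (rule sum.swap)
      then show ?thesis by (metis L2_set_right_distrib norm_ge_zero)
    qed
    finally show ?thesis .
  qed
  then have "norm (A ** B) \<le> L2_set (\<lambda>i. norm (A $ i) * norm B) UNIV"
    unfolding norm_vec_def[of "A ** B"] by (intro L2_set_mono) auto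
  then show ?thesis
    by (simp add: norm_vec_def[of A] L2_set_left_distrib)
qed

lemma norm_matrix_mult_le_mult:
  fixes A :: "'a::real_normed_algebra_1^'n^'m" and B :: "'a^'k^'n"
  assumes "norm A \<le> a" "norm B \<le> b"
  shows "norm (A ** B) \<le> a * b"
proof -
  have "norm A * norm B \<le> a * b"
    using assms by (intro mult_mono) (auto intro: order_trans[OF norm_ge_zero])
  then show ?thesis using norm_matrix_mult_le[of A B] by linarith
qed

lemma norm_mat: "norm (mat c :: 'a::real_normed_vector^'n^'n) = norm c * sqrt CARD('n)"
proof -
  have "(norm (mat c :: 'a^'n^'n))\<^sup>2 = (norm c * sqrt CARD('n))\<^sup>2"
    unfolding norm_matrix_sq mat_def
    by (simp add: if_distrib if_distribR sum.delta power_mult_distrib cong: if_cong)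
  then show ?thesis by simp
qed

lemma continuous_on_matrix_mult [continuous_intros]:
  fixes f :: "_ \<Rightarrow> 'a::real_normed_algebra_1^'n^'m" and g :: "_ \<Rightarrow> 'a^'k^'n"
  assumes "continuous_on S f" "continuous_on S g"
  shows "continuous_on S (\<lambda>x. f x ** g x)"
  unfolding matrix_matrix_mult_def by (intro continuous_intros assms)

section \<open>Matrix inverse under perturbation\<close>

lemma matrix_add_rdistrib: "((A::'a::semiring_1^'n^'m) + B) ** C = A ** C + B ** C"
  by (vector matrix_matrix_mult_def sum.distrib[symmetric] field_simps)

lemma matrix_diff_rdistrib: "((A::'a::ring_1^'n^'m) - B) ** C = A ** C - B ** C"
  by (vector matrix_matrix_mult_def sum_subtractf[symmetric] field_simps)

lemma matrix_mul_lneg: "(- A::'a::ring_1^'n^'m) ** B = - (A ** B)"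
  by (vector matrix_matrix_mult_def sum_negf[symmetric])

lemma matrix_mul_rneg: "(A::'a::ring_1^'n^'m) ** (- B) = - (A ** B)"
  by (vector matrix_matrix_mult_def sum_negf[symmetric])

lemma matrix_vector_mult_minus_right: "(A::'a::ring_1^'n^'m) *v (- x) = - (A *v x)"
  by (simp add: matrix_vector_mult_def vec_eq_iff sum_negf)

lemma mat_mult_mat: "(mat a :: 'a::semiring_1^'n^'n) ** mat b = mat (a * b)"
proof -
  have "(\<Sum>k\<in>UNIV. (if i = k then a else 0) * (if k = j then b else 0))
      = (\<Sum>k\<in>UNIV. if k = i then (if i = j then a * b else 0) else 0)" for i j :: 'n
    by (rule sum.cong) auto
  then show ?thesis unfolding matrix_matrix_mult_def mat_def by (simp add: vec_eq_iff)
qed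

lemma matrix_inv:
  fixes X :: "'a::field^'n^'n"
  assumes "invertible X"
  shows matrix_inv_right: "X ** matrix_inv X = mat 1"
    and matrix_inv_left: "matrix_inv X ** X = mat 1"
  using assms unfolding invertible_def matrix_inv_def by (metis (mono_tags, lifting) someI_ex)+

lemma matrix_inv_unique:
  fixes X W :: "'a::field^'n^'n"
  assumes "W ** X = mat 1"
  shows "matrix_inv X = W"
proof -
  have "invertible X" using assms invertible_left_inverse by blast
  then have "W = W ** (X ** matrix_inv X)" by (simp add: matrix_inv_right)
  also have "\<dots> = matrix_inv X" by (simp add: matrix_mul_assoc assms)
  finally show ?thesis by simp
qed

lemma matrix_inv_mat:
  fixes c :: "'a::field"
  assumes "c \<noteq> 0"
  shows "invertible (mat c :: 'a^'n^'n)" "matrix_inv (mat c :: 'a^'n^'n) = mat (inverse c)"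
proof -
  have inv: "mat (inverse c) ** (mat c :: 'a^'n^'n) = mat 1"
    using assms by (simp add: mat_mult_mat)
  then show "invertible (mat c :: 'a^'n^'n)" using invertible_left_inverse by blast
  show "matrix_inv (mat c :: 'a^'n^'n) = mat (inverse c)" using matrix_inv_unique[OF inv] .
qed

lemma matrix_inv_perturb:
  fixes X E :: "'a::real_normed_field^'n^'n"
  assumes X: "invertible X" and small: "norm (matrix_inv X) * norm E \<le> 1/2"
  shows "invertible (X + E)"
    and "matrix_inv (X + E) = matrix_inv X - matrix_inv (X + E) ** E ** matrix_inv X"
    and "norm (matrix_inv (X + E)) \<le> 2 * norm (matrix_inv X)"
proof -
  let ?Xi = "matrix_inv X"
  have "v = 0" if "(X + E) *v v = 0" for v
  proof -
    have "v = ?Xi *v (X *v v)" by (simp add: matrix_vector_mul_assoc matrix_inv_left[OF X])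
    also have "X *v v = - (E *v v)"
      using that by (simp add: matrix_vector_mult_add_rdistrib eq_neg_iff_add_eq_0)
    finally have "v = - ((?Xi ** E) *v v)"
      by (simp add: matrix_vector_mult_minus_right matrix_vector_mul_assoc)
    then have "norm v = norm ((?Xi ** E) *v v)" by (metis norm_minus_cancel)
    also have "\<dots> \<le> norm ?Xi * norm E * norm v"
      by (intro order_trans[OF norm_matrix_vector_mult_le] mult_right_mono norm_matrix_mult_le) simp
    also have "\<dots> \<le> 1/2 * norm v" by (intro mult_right_mono small) simp
    finally show "v = 0" by simp
  qed
  then show inv: "invertible (X + E)"
    by (simp add: invertible_left_inverse matrix_left_invertible_ker)
  let ?W = "matrix_inv (X + E)"
  have WX: "?W ** X = mat 1 - ?W ** E"
    using matrix_inv_left[OF inv] by (simp add: matrix_add_ldistrib eq_diff_eq)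
  have "?W = ?W ** X ** ?Xi" by (simp add: matrix_inv_right[OF X] flip: matrix_mul_assoc)
  also have "\<dots> = ?Xi - ?W ** E ** ?Xi" unfolding WX matrix_diff_rdistrib by simp
  finally show eq: "?W = ?Xi - ?W ** E ** ?Xi" .
  have "norm ?W \<le> norm ?Xi + norm (?W ** E ** ?Xi)"
    by (subst eq) (rule norm_triangle_ineq4)
  also have "norm (?W ** E ** ?Xi) \<le> norm ?W * (norm ?Xi * norm E)"
    by (intro order_trans[OF norm_matrix_mult_le_mult[OF norm_matrix_mult_le order_refl]])
       (simp add: mult_ac)
  also have "\<dots> \<le> norm ?W * (1/2)" by (intro mult_left_mono small) simp
  finally show "norm ?W \<le> 2 * norm ?Xi" by simp
qed

lemma isCont_matrix_inv:
  fixes X :: "'a::real_normed_field^'n^'n"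
  assumes X: "invertible X"
  shows "isCont matrix_inv X"
proof -
  let ?Xi = "matrix_inv X"
  define \<delta> where "\<delta> = 1 / (2 * (norm ?Xi + 1))"
  have pos: "norm ?Xi + 1 > 0" by (simp add: add_nonneg_pos)
  then have \<delta>: "\<delta> > 0" unfolding \<delta>_def by simp
  have bound: "norm (matrix_inv Y - ?Xi) \<le> 2 * (norm ?Xi)\<^sup>2 * norm (Y - X)"
    if "dist Y X < \<delta>" for Y
  proof -
    have "norm ?Xi * norm (Y - X) \<le> (norm ?Xi + 1) * \<delta>"
      using that by (intro mult_mono) (auto simp: dist_norm)
    also have "\<dots> \<le> 1/2" unfolding \<delta>_def using pos by simp
    finally have small: "norm ?Xi * norm (Y - X) \<le> 1/2" .
    note pert = matrix_inv_perturb[OF X small, simplified]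
    have "matrix_inv Y - ?Xi = (?Xi - matrix_inv Y ** (Y - X) ** ?Xi) - ?Xi"
      using pert(2) by (rule arg_cong)
    then have "norm (matrix_inv Y - ?Xi) = norm (matrix_inv Y ** (Y - X) ** ?Xi)" by simp
    also have "\<dots> \<le> (2 * norm ?Xi) * norm (Y - X) * norm ?Xi"
      by (intro norm_matrix_mult_le_mult pert(3) order_refl)
    finally show ?thesis by (simp add: power2_eq_square mult_ac)
  qed
  have "((\<lambda>Y. matrix_inv Y - ?Xi) \<longlongrightarrow> 0) (at X)"
  proof (rule Lim_null_comparison)
    show "\<forall>\<^sub>F Y in at X. norm (matrix_inv Y - ?Xi) \<le> 2 * (norm ?Xi)\<^sup>2 * norm (Y - X)"
      using bound \<delta> by (auto simp: eventually_at)
    show "((\<lambda>Y. 2 * (norm ?Xi)\<^sup>2 * norm (Y - X)) \<longlongrightarrow> 0) (at X)"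
      by (intro tendsto_eq_intros) (auto intro: tendsto_ident_at)
  qed
  then show ?thesis by (simp add: isCont_def LIM_zero_iff)
qed

lemma divide_one_plus_abs_le: "0 \<le> c \<Longrightarrow> c / (1 + \<bar>l\<bar>) \<le> (c::real)"
  using divide_left_mono[of 1 "1 + \<bar>l\<bar>" c] by simp

lemma has_derivative_quadratic_remainder:
  fixes f :: "'a::real_normed_vector \<Rightarrow> 'b::real_normed_vector"
  assumes L: "bounded_linear L" and \<delta>: "\<delta> > 0"
    and rem: "\<And>y. norm (y - x) < \<delta> \<Longrightarrow> norm (f y - f x - L (y - x)) \<le> Q * (norm (y - x))\<^sup>2"
  shows "(f has_derivative L) (at x)"
  unfolding has_derivative_at_alt
proof (intro conjI L allI impI)
  fix e :: real assume e: "e > 0"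
  show "\<exists>d>0. \<forall>y. norm (y - x) < d \<longrightarrow> norm (f y - f x - L (y - x)) \<le> e * norm (y - x)"
  proof (intro exI[of _ "min \<delta> (e / (\<bar>Q\<bar> + 1))"] conjI allI impI)
    show "min \<delta> (e / (\<bar>Q\<bar> + 1)) > 0" using \<delta> e by simp
    fix y assume y: "norm (y - x) < min \<delta> (e / (\<bar>Q\<bar> + 1))"
    have "\<bar>Q\<bar> * norm (y - x) \<le> (\<bar>Q\<bar> + 1) * (e / (\<bar>Q\<bar> + 1))"
      using y by (intro mult_mono) auto
    then have Qe: "\<bar>Q\<bar> * norm (y - x) \<le> e" by simp
    have "Q * (norm (y - x))\<^sup>2 \<le> \<bar>Q\<bar> * norm (y - x) * norm (y - x)"
      using mult_right_mono[OF abs_ge_self[of Q] zero_le_power2[of "norm (y - x)"]]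
      by (simp add: power2_eq_square mult.assoc)
    also have "\<dots> \<le> e * norm (y - x)" by (rule mult_right_mono[OF Qe norm_ge_zero])
    finally have "Q * (norm (y - x))\<^sup>2 \<le> e * norm (y - x)" .
    with rem[of y] y show "norm (f y - f x - L (y - x)) \<le> e * norm (y - x)" by simp
  qed
qed

lemma integrable_square_decay:
  fixes f :: "real \<Rightarrow> 'b::{banach, second_countable_topology}"
  assumes f: "f \<in> borel_measurable lborel" and bound: "\<And>l. norm (f l) \<le> k / (1 + \<bar>l\<bar>)\<^sup>2"
  shows "integrable lborel f"
    and "norm (integral\<^sup>L lborel f) \<le> k * pi"
proof -
  have "k \<ge> 0" using bound[of 0] by (auto intro: order_trans[OF norm_ge_zero])
  have "k / (1 + \<bar>l\<bar>)\<^sup>2 \<le> k * inverse (1 + l\<^sup>2)" for l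
  proof -
    have "1 + l\<^sup>2 \<le> (1 + \<bar>l\<bar>)\<^sup>2" by (simp add: power2_eq_square algebra_simps)
    then have "k / (1 + \<bar>l\<bar>)\<^sup>2 \<le> k / (1 + l\<^sup>2)"
      using \<open>k \<ge> 0\<close> by (intro divide_left_mono) (auto intro!: mult_pos_pos add_pos_nonneg)
    then show ?thesis by (simp add: divide_inverse)
  qed
  then have le: "norm (f l) \<le> k * inverse (1 + l\<^sup>2)" for l using bound order_trans by blast
  have int: "integrable lborel (\<lambda>l::real. k * inverse (1 + l\<^sup>2))"
    using integrable_inverse_1_plus_square by (simp add: set_integrable_def einterval_def)
  show "integrable lborel f"
    by (rule Bochner_Integration.integrable_bound[OF int f]) (use le \<open>k \<ge> 0\<close> in simp)
  have "norm (integral\<^sup>L lborel f) \<le> (LINT l|lborel. k * inverse (1 + l\<^sup>2))"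
    by (rule Bochner_Integration.integral_norm_bound_integral[OF \<open>integrable lborel f\<close> int le])
  also have "\<dots> = k * pi"
    using LBINT_inverse_1_plus_square
    by (simp add: interval_lebesgue_integral_def set_lebesgue_integral_def einterval_def)
  finally show "norm (integral\<^sup>L lborel f) \<le> k * pi" .
qed

lemma cmat_add: "cmat (X + Y) = cmat X + cmat Y"
  unfolding cmat_def by vector

lemma norm_cmat: "norm (cmat X) = norm X"
proof -
  have "(norm (cmat X))\<^sup>2 = (norm X)\<^sup>2"
    by (simp add: norm_matrix_sq cmat_def)
  then show ?thesis by simp
qed

lemma adj_mult: "adj ((P::complex^'k^'m) ** Q) = adj Q ** adj P"
  by (simp add: adj_def matrix_matrix_mult_def vec_eq_iff mult.commute)

lemma adj_cmat: "adj (cmat X) = cmat (transpose X)"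
  by (simp add: adj_def cmat_def transpose_def vec_eq_iff)

lemma norm_adj: "norm (adj X) = norm X"
proof -
  have "(norm (adj X))\<^sup>2 = (norm X)\<^sup>2"
    unfolding norm_matrix_sq adj_def by (simp, rule sum.swap)
  then show ?thesis by simp
qed

lemma norm_cmat_transpose: "norm (cmat (transpose X)) = norm X"
  by (metis adj_cmat norm_adj norm_cmat)

lemma norm_remat_le: "norm (remat X) \<le> norm X"
proof -
  have "(norm (remat X))\<^sup>2 \<le> (norm X)\<^sup>2"
    unfolding norm_matrix_sq remat_def by (auto intro!: sum_mono simp: cmod_power2)
  then show ?thesis by (rule power2_le_imp_le) simp
qed

lemma finner_eq_sum: "finner X Y = (\<Sum>i\<in>UNIV. \<Sum>j\<in>UNIV. cnj (X $ i $ j) * Y $ i $ j)"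
  unfolding finner_def trace_def adj_def matrix_matrix_mult_def by (simp, rule sum.swap)

lemma norm_finner_le: "norm (finner X Y) \<le> norm X * norm Y"
proof -
  have "norm (finner X Y) \<le> (\<Sum>i\<in>UNIV. \<bar>norm (X $ i)\<bar> * \<bar>norm (Y $ i)\<bar>)"
    unfolding finner_eq_sum
    using norm_sum_mult_le_L2_set[of "\<lambda>j. cnj (X $ _ $ j)" "\<lambda>j. Y $ _ $ j" UNIV]
    by (intro order_trans[OF norm_sum sum_mono]) (simp add: norm_vec_def)
  also have "\<dots> \<le> norm X * norm Y"
    using L2_set_mult_ineq[of "\<lambda>i. norm (X $ i)" "\<lambda>i. norm (Y $ i)" UNIV]
    by (simp add: norm_vec_def[of X] norm_vec_def[of Y])
  finally show ?thesis .
qed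

lemma finner_mult_left: "finner ((P::complex^'k^'m) ** Q) Y = finner Q (adj P ** Y)"
  unfolding finner_def adj_mult by (simp add: matrix_mul_assoc)

lemma finner_mult_right: "finner ((Q::complex^'k^'m) ** P) Y = finner Q (Y ** adj P)"
  unfolding finner_def adj_mult by (metis matrix_mul_assoc trace_mul_sym)

lemma finner_commute: "finner Y X = cnj (finner X Y)"
  unfolding finner_eq_sum by (simp add: mult.commute)

lemma finner_add_left: "finner (X + Y) Z = finner X Z + finner Y Z"
  unfolding finner_eq_sum by (simp add: sum.distrib distrib_right)

lemma finner_add_right: "finner Z (X + Y) = finner Z X + finner Z Y"
  unfolding finner_eq_sum by (simp add: sum.distrib distrib_left)

lemma finner_diff_left: "finner (X - Y) Z = finner X Z - finner Y Z"
  unfolding finner_eq_sum by (simp add: sum_subtractf left_diff_distrib)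

lemma Re_finner_cmat: "Re (finner (cmat D) Y) = inner D (remat Y)"
  unfolding finner_eq_sum cmat_def remat_def inner_vec_def by (simp add: Re_sum)

lemma continuous_on_adj [continuous_intros]: "continuous_on S f \<Longrightarrow> continuous_on S (\<lambda>x. adj (f x))"
  unfolding adj_def by (intro continuous_intros)

lemma continuous_on_remat [continuous_intros]: "continuous_on S f \<Longrightarrow> continuous_on S (\<lambda>x. remat (f x))"
  unfolding remat_def by (intro continuous_intros)

lemma continuous_on_finner [continuous_intros]:
  "continuous_on S f \<Longrightarrow> continuous_on S g \<Longrightarrow> continuous_on S (\<lambda>x. finner (f x) (g x))"
  unfolding finner_eq_sum by (intro continuous_intros)

lemma matrix_axis_expansion: "X = (\<Sum>i\<in>UNIV. \<Sum>j\<in>UNIV. cscale (X $ i $ j) (axis i (axis j 1)))"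
proof -
  have "(\<Sum>i\<in>UNIV. \<Sum>j\<in>UNIV. X $ i $ j * axis i (axis j 1) $ a $ b) = X $ a $ b" for a b
  proof -
    have "(\<Sum>j\<in>UNIV. X $ i $ j * axis i (axis j 1) $ a $ b) = (if i = a then X $ a $ b else 0)" for i
      by (cases "i = a") (simp_all add: axis_def if_distrib cong: if_cong)
    then show ?thesis by simp
  qed
  then show ?thesis by (simp add: vec_eq_iff sum_component cscale_def)
qed

lemma continuous_cscale: "continuous_on UNIV (\<lambda>p. cscale (fst p) (snd p) :: complex^'n^'m)"
  unfolding cscale_def by (intro continuous_on_vec_lambda continuous_intros)

lemma borel_measurable_matrix_entry:
  fixes Y :: "real \<Rightarrow> complex^'n^'m"
  assumes "Y \<in> borel_measurable lborel"
  shows "(\<lambda>l. Y l $ i $ j) \<in> borel_measurable lborel"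
  by (rule borel_measurable_continuous_on[OF _ assms]) (intro continuous_intros)

section \<open>Block matrices\<close>

lemma sum_UNIV_Plus:
  "(\<Sum>i\<in>(UNIV::('a::finite + 'b::finite) set). f i) = (\<Sum>a\<in>UNIV. f (Inl a)) + (\<Sum>b\<in>UNIV. f (Inr b))"
  by (subst UNIV_Plus_UNIV[symmetric], subst sum.Plus) (auto simp: o_def)

definition blkD :: "'a^('n::finite+'m::finite)^('n+'r::finite) \<Rightarrow> 'a^'m^'r" where
  "blkD G = (\<chi> i j. G $ Inr i $ Inr j)"

lemma blk_decompose: "G = blk (blkA G) (blkB G) (blkC G) (blkD G)"
  by (simp add: blk_def blkA_def blkB_def blkC_def blkD_def vec_eq_iff split: sum.split)

lemma blkA_blk [simp]: "blkA (blk a b c d) = a"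
  and blkB_blk [simp]: "blkB (blk a b c d) = b"
  and blkC_blk [simp]: "blkC (blk a b c d) = c"
  by (simp_all add: blk_def blkA_def blkB_def blkC_def vec_eq_iff)

lemma blkA_add: "blkA (X + Y) = blkA X + blkA Y"
  and blkB_add: "blkB (X + Y) = blkB X + blkB Y"
  and blkC_add: "blkC (X + Y) = blkC X + blkC Y"
  by (simp_all add: blkA_def blkB_def blkC_def vec_eq_iff)

lemma norm_blk_sq:
  "(norm (blk a b c d :: 'a::real_normed_vector^_^_))\<^sup>2 = (norm a)\<^sup>2 + (norm b)\<^sup>2 + (norm c)\<^sup>2 + (norm d)\<^sup>2"
  unfolding norm_matrix_sq by (simp add: sum_UNIV_Plus blk_def sum.distrib)

lemma norm_blk_le: "norm (blk a b c d :: 'a::real_normed_vector^_^_) \<le> norm a + norm b + norm c + norm d"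
proof -
  have "(norm (blk a b c d))\<^sup>2 \<le> (norm a + norm b + norm c + norm d)\<^sup>2"
    unfolding norm_blk_sq by (simp add: power2_eq_square algebra_simps)
  then show ?thesis by (rule power2_le_imp_le) simp
qed

lemma norm_blkA_le: "norm (blkA G :: 'a::real_normed_vector^_^_) \<le> norm G"
  and norm_blkB_le: "norm (blkB G) \<le> norm G"
  and norm_blkC_le: "norm (blkC G) \<le> norm G"
proof -
  have sq: "(norm G)\<^sup>2 = (norm (blkA G))\<^sup>2 + (norm (blkB G))\<^sup>2 + (norm (blkC G))\<^sup>2 + (norm (blkD G))\<^sup>2"
    by (subst blk_decompose) (rule norm_blk_sq)
  show "norm (blkA G) \<le> norm G" by (rule power2_le_imp_le) (use sq in simp_all)
  show "norm (blkB G) \<le> norm G" by (rule power2_le_imp_le) (use sq in simp_all)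
  show "norm (blkC G) \<le> norm G" by (rule power2_le_imp_le) (use sq in simp_all)
qed

lemma vstack_mult_hstack:
  "vstack U V ** X ** hstack W Z = blk (U ** X ** W) (U ** X ** Z) (V ** X ** W) (V ** X ** Z)"
  by (simp add: vstack_def hstack_def blk_def matrix_matrix_mult_def vec_eq_iff split: sum.split)

lemma Pfrak_blk: "Pfrak (blk a b c d) = blk a b c 0"
  by (simp add: Pfrak_def blk_def vec_eq_iff split: sum.split)

lemma remat_blk: "remat (blk a b c d) = blk (remat a) (remat b) (remat c) (remat d)"
  by (simp add: remat_def blk_def vec_eq_iff split: sum.split)

lemma remat_zero [simp]: "remat 0 = 0"
  by (simp add: remat_def vec_eq_iff)

lemma inner_blk:
  "inner (blk a b c d) G = inner a (blkA G) + inner b (blkB G) + inner c (blkC G) + inner d (blkD G)"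
  unfolding inner_vec_def
  by (simp add: sum_UNIV_Plus blk_def blkA_def blkB_def blkC_def blkD_def sum.distrib)

lemma continuous_on_vstack [continuous_intros]:
  assumes "continuous_on S f" "continuous_on S g"
  shows "continuous_on S (\<lambda>x. vstack (f x) (g x))"
  unfolding vstack_def
proof (intro continuous_on_vec_lambda)
  fix i show "continuous_on S (\<lambda>x. case i of Inl a \<Rightarrow> f x $ a | Inr b \<Rightarrow> g x $ b)"
    by (cases i) (simp_all add: continuous_on_component assms)
qed

lemma continuous_on_hstack [continuous_intros]:
  assumes "continuous_on S f" "continuous_on S g"
  shows "continuous_on S (\<lambda>x. hstack (f x) (g x))"
  unfolding hstack_def
proof (intro continuous_on_vec_lambda)
  fix i j show "continuous_on S (\<lambda>x. case j of Inl a \<Rightarrow> f x $ i $ a | Inr b \<Rightarrow> g x $ i $ b)"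
    by (cases j) (simp_all add: continuous_on_component assms)
qed

lemma continuous_on_Pfrak [continuous_intros]:
  assumes "continuous_on S f"
  shows "continuous_on S (\<lambda>x. Pfrak (f x))"
  unfolding Pfrak_def
proof (intro continuous_on_vec_lambda)
  fix i j show "continuous_on S (\<lambda>x. case (i, j) of (Inr _, Inr _) \<Rightarrow> 0 | _ \<Rightarrow> f x $ i $ j)"
    by (cases i; cases j) (simp_all add: continuous_on_component assms)
qed

section \<open>The resolvent on the imaginary axis\<close>

lemma mat_mult_of_real: "mat (c * complex_of_real r) = r *\<^sub>R (mat c :: complex^'n^'n)"
  unfolding mat_def by (vector scaleR_conv_of_real)

lemma invertible_imag_pencil:
  assumes "hurwitz A"
  shows "invertible (mat (\<i> * complex_of_real l) - cmat A)"
  using assms unfolding hurwitz_def invertible_det_nz by fastforce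

lemma resolvent_perturb:
  fixes A dA :: "real^'n^'n"
  assumes inv: "invertible (mat s - cmat A)" and small: "norm (Gtf A s) * norm dA \<le> 1/2"
  shows "invertible (mat s - cmat (A + dA))"
    and "Gtf (A + dA) s = Gtf A s + Gtf (A + dA) s ** cmat dA ** Gtf A s"
    and "norm (Gtf (A + dA) s) \<le> 2 * norm (Gtf A s)"
proof -
  have pencil: "mat s - cmat (A + dA) = (mat s - cmat A) + - cmat dA"
    by (simp add: cmat_add)
  have small': "norm (matrix_inv (mat s - cmat A)) * norm (- cmat dA) \<le> 1/2"
    using small by (simp add: Gtf_def norm_cmat)
  note pert = matrix_inv_perturb[OF inv small', folded pencil]
  show "invertible (mat s - cmat (A + dA))" by (rule pert(1))
  show "Gtf (A + dA) s = Gtf A s + Gtf (A + dA) s ** cmat dA ** Gtf A s"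
    using pert(2) by (simp add: Gtf_def matrix_mul_lneg matrix_mul_rneg)
  show "norm (Gtf (A + dA) s) \<le> 2 * norm (Gtf A s)"
    using pert(3) by (simp add: Gtf_def)
qed

lemma norm_resolvent_large:
  fixes A :: "real^'n^'n"
  assumes large: "norm s \<ge> 2 * sqrt CARD('n) * norm A + 1"
  shows "norm (Gtf A s) \<le> 2 * sqrt CARD('n) / norm s"
proof -
  have "2 * sqrt CARD('n) * norm A \<ge> 0" by simp
  then have "norm s > 0" using large by linarith
  then have s: "s \<noteq> 0" "norm s > 0" by auto
  have inv_mat: "norm (matrix_inv (mat s :: complex^'n^'n)) = sqrt CARD('n) / norm s"
    using s by (simp add: matrix_inv_mat norm_mat norm_inverse divide_inverse)
  have "norm (matrix_inv (mat s :: complex^'n^'n)) * norm (- cmat A) = sqrt CARD('n) * norm A / norm s"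
    by (simp add: inv_mat norm_cmat)
  also have "\<dots> \<le> 1/2"
    using large s by (simp add: divide_le_eq)
  finally have small: "norm (matrix_inv (mat s :: complex^'n^'n)) * norm (- cmat A) \<le> 1/2" .
  show ?thesis
    using matrix_inv_perturb(3)[OF matrix_inv_mat(1)[OF s(1)] small] inv_mat
    by (simp add: Gtf_def)
qed

lemma continuous_on_resolvent_imag:
  fixes A :: "real^'n^'n"
  assumes inv: "\<And>l. invertible (mat (\<i> * complex_of_real l) - cmat A)"
  shows "continuous_on UNIV (\<lambda>l. Gtf A (\<i> * complex_of_real l))"
proof -
  have "isCont (\<lambda>l. matrix_inv (l *\<^sub>R mat \<i> - cmat A)) l" for l
    using inv[of l] unfolding mat_mult_of_real
    by (intro continuous_at_compose[unfolded o_def, OF _ isCont_matrix_inv]) (auto intro!: continuous_intros)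
  then show ?thesis
    by (simp add: continuous_on_eq_continuous_at Gtf_def mat_mult_of_real)
qed

lemma resolvent_imag_decay:
  fixes A :: "real^'n^'n"
  assumes inv: "\<And>l. invertible (mat (\<i> * complex_of_real l) - cmat A)"
  obtains c where "c > 0" "\<And>l. norm (Gtf A (\<i> * complex_of_real l)) \<le> c / (1 + \<bar>l\<bar>)"
proof -
  let ?s = "sqrt CARD('n)"
  define h where "h l = norm (Gtf A (\<i> * complex_of_real l)) * (1 + \<bar>l\<bar>)" for l
  define L where "L = 2 * ?s * norm A + 1"
  have L1: "L \<ge> 1" unfolding L_def by simp
  have "continuous_on {-L..L} h"
    unfolding h_def
    by (intro continuous_intros continuous_on_subset[OF continuous_on_resolvent_imag[OF inv]]) auto
  then have "bounded (h ` {-L..L})" by (intro compact_imp_bounded compact_continuous_image) auto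
  then obtain g where g: "\<And>l. l \<in> {-L..L} \<Longrightarrow> norm (h l) \<le> g" unfolding bounded_iff by blast
  define c where "c = g + 4 * ?s + 1"
  have "g \<ge> 0" using g[of 0] L1 by (auto intro: order_trans[OF norm_ge_zero])
  then have "c > 0" unfolding c_def by (simp add: add_nonneg_pos)
  moreover have "h l \<le> c" for l
  proof (cases "\<bar>l\<bar> \<le> L")
    case True
    then have "h l \<le> g" using g[of l] by (auto simp: abs_le_iff)
    moreover have "?s \<ge> 0" by simp
    ultimately show ?thesis unfolding c_def by linarith
  next
    case False
    then have l: "\<bar>l\<bar> \<ge> L" "\<bar>l\<bar> \<ge> 1" using L1 by auto
    have "norm (Gtf A (\<i> * complex_of_real l)) \<le> 2 * ?s / norm (\<i> * complex_of_real l)"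
      using l by (intro norm_resolvent_large) (simp add: norm_mult L_def)
    then have "h l \<le> 2 * ?s / \<bar>l\<bar> * (1 + \<bar>l\<bar>)"
      unfolding h_def by (intro mult_right_mono) (auto simp: norm_mult)
    also have "\<dots> = 2 * ?s * (1 / \<bar>l\<bar> + 1)" using l by (simp add: field_simps)
    also have "\<dots> \<le> 2 * ?s * 2" using l by (intro mult_left_mono) auto
    finally show ?thesis using \<open>g \<ge> 0\<close> by (simp add: c_def)
  qed
  ultimately show ?thesis
    by (intro that[of c]) (auto simp: h_def pos_le_divide_eq add_pos_nonneg)
qed

lemma resolvent_imag_perturb:
  fixes A dA :: "real^'n^'n"
  assumes inv: "\<And>l. invertible (mat (\<i> * complex_of_real l) - cmat A)"
    and decay: "\<And>l. norm (Gtf A (\<i> * complex_of_real l)) \<le> c / (1 + \<bar>l\<bar>)"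
    and small: "c * norm dA \<le> 1/2"
  shows "invertible (mat (\<i> * complex_of_real l) - cmat (A + dA))"
    and "Gtf (A + dA) (\<i> * complex_of_real l)
           = Gtf A (\<i> * complex_of_real l) + Gtf (A + dA) (\<i> * complex_of_real l) ** cmat dA ** Gtf A (\<i> * complex_of_real l)"
    and "norm (Gtf (A + dA) (\<i> * complex_of_real l)) \<le> 2 * c / (1 + \<bar>l\<bar>)"
proof -
  have "c \<ge> 0" using decay[of 0] by (auto intro: order_trans[OF norm_ge_zero])
  then have "c / (1 + \<bar>l\<bar>) \<le> c" by (rule divide_one_plus_abs_le)
  then have "norm (Gtf A (\<i> * complex_of_real l)) * norm dA \<le> c * norm dA"
    using decay[of l] by (intro mult_right_mono) auto
  then have small': "norm (Gtf A (\<i> * complex_of_real l)) * norm dA \<le> 1/2" using small by linarith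
  note pert = resolvent_perturb[OF inv small']
  show "invertible (mat (\<i> * complex_of_real l) - cmat (A + dA))" by (rule pert(1))
  show "Gtf (A + dA) (\<i> * complex_of_real l)
      = Gtf A (\<i> * complex_of_real l) + Gtf (A + dA) (\<i> * complex_of_real l) ** cmat dA ** Gtf A (\<i> * complex_of_real l)"
    by (rule pert(2))
  show "norm (Gtf (A + dA) (\<i> * complex_of_real l)) \<le> 2 * c / (1 + \<bar>l\<bar>)"
    using pert(3) decay[of l] by simp
qed

section \<open>Perturbation of the transfer function\<close>

lemma transfer_first_order_identity:
  fixes C dC :: "'a::ring_1^'n^'r" and G Gp dA :: "'a^'n^'n" and B dB :: "'a^'m^'n"
  assumes Gp: "Gp = G + Gp ** dA ** G"
  shows "(C + dC) ** Gp ** (B + dB) - C ** G ** B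
       = dC ** Gp ** (B + dB) + C ** G ** dB + C ** Gp ** dA ** G ** (B + dB)"
proof -
  have "C ** Gp ** (B + dB) = C ** G ** (B + dB) + C ** Gp ** dA ** G ** (B + dB)"
    by (subst Gp) (simp add: matrix_add_ldistrib matrix_add_rdistrib matrix_mul_assoc)
  then show ?thesis
    by (simp add: matrix_add_ldistrib matrix_add_rdistrib algebra_simps)
qed

lemma transfer_second_order_identity:
  fixes C dC :: "'a::ring_1^'n^'r" and G Gp dA :: "'a^'n^'n" and B dB :: "'a^'m^'n"
  assumes Gp: "Gp = G + Gp ** dA ** G"
  shows "(C + dC) ** Gp ** (B + dB) - C ** G ** B
           - (dC ** G ** B + C ** G ** dA ** G ** B + C ** G ** dB)
       = dC ** Gp ** dA ** G ** (B + dB) + dC ** G ** dB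
           + C ** Gp ** dA ** G ** dA ** G ** B + C ** Gp ** dA ** G ** dB"
proof -
  have dC: "dC ** Gp ** (B + dB) = dC ** G ** B + dC ** G ** dB + dC ** Gp ** dA ** G ** (B + dB)"
    by (subst Gp) (simp add: matrix_add_ldistrib matrix_add_rdistrib matrix_mul_assoc)
  have C: "C ** Gp ** dA ** G ** B = C ** G ** dA ** G ** B + C ** Gp ** dA ** G ** dA ** G ** B"
    by (subst Gp) (simp add: matrix_add_ldistrib matrix_add_rdistrib matrix_mul_assoc)
  show ?thesis
    unfolding transfer_first_order_identity[OF Gp] dC matrix_add_ldistrib[of "C ** Gp ** dA ** G"] C
    by (simp add: algebra_simps)
qed

lemma norm_transfer_perturbation_le:
  fixes C dC :: "'a::real_normed_algebra_1^'n^'r" and G Gp dA :: "'a^'n^'n" and B dB :: "'a^'m^'n"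
  assumes Gp: "Gp = G + Gp ** dA ** G"
    and G: "norm G \<le> g" "norm Gp \<le> 2 * g" "g \<le> \<rho>"
    and t: "norm dA \<le> t" "norm dB \<le> t" "norm dC \<le> t" "t \<le> 1"
    and BC: "norm B + 1 \<le> \<rho>" "norm C \<le> \<rho>"
  shows "norm ((C + dC) ** Gp ** (B + dB) - C ** G ** B) \<le> t * g * (3 * \<rho> + 2 * \<rho>^3)"
    and "norm ((C + dC) ** Gp ** (B + dB) - C ** G ** B
               - (dC ** G ** B + C ** G ** dA ** G ** B + C ** G ** dB))
           \<le> t * t * g * (4 * \<rho>\<^sup>2 + 1 + 2 * \<rho>^4)"
proof -
  have G': "norm G \<le> \<rho>" using G by linarith
  have B: "norm B \<le> \<rho>" and B': "norm (B + dB) \<le> \<rho>"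
    using BC t norm_triangle_ineq[of B dB] by linarith+
  have "norm ((C + dC) ** Gp ** (B + dB) - C ** G ** B)
      \<le> t * (2 * g) * \<rho> + \<rho> * g * t + \<rho> * (2 * g) * t * \<rho> * \<rho>"
    unfolding transfer_first_order_identity[OF Gp]
    by (intro order_trans[OF norm_triangle_ineq] add_mono norm_matrix_mult_le_mult G G' B B' BC t)
  also have "\<dots> = t * g * (3 * \<rho> + 2 * \<rho>^3)" by (simp add: algebra_simps power3_eq_cube)
  finally show "norm ((C + dC) ** Gp ** (B + dB) - C ** G ** B) \<le> t * g * (3 * \<rho> + 2 * \<rho>^3)" .
  have "norm ((C + dC) ** Gp ** (B + dB) - C ** G ** B
          - (dC ** G ** B + C ** G ** dA ** G ** B + C ** G ** dB))
      \<le> t * (2 * g) * t * \<rho> * \<rho> + t * g * t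
          + \<rho> * (2 * g) * t * \<rho> * t * \<rho> * \<rho> + \<rho> * (2 * g) * t * \<rho> * t"
    unfolding transfer_second_order_identity[OF Gp]
    by (intro order_trans[OF norm_triangle_ineq] add_mono norm_matrix_mult_le_mult G G' B B' BC t)
  also have "\<dots> = t * t * g * (4 * \<rho>\<^sup>2 + 1 + 2 * \<rho>^4)"
    by (simp add: algebra_simps power2_eq_square power4_eq_xxxx)
  finally show "norm ((C + dC) ** Gp ** (B + dB) - C ** G ** B
               - (dC ** G ** B + C ** G ** dA ** G ** B + C ** G ** dB))
           \<le> t * t * g * (4 * \<rho>\<^sup>2 + 1 + 2 * \<rho>^4)" .
qed

lemma inner_grad_block_eq:
  fixes G :: "complex^'n^'n" and X :: "complex^'m^'r" and B :: "real^'m^'n" and C :: "real^'n^'r"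
    and D :: "real^('n+'m)^('n+'r)"
  shows "inner (remat (Pfrak (vstack (adj G ** cmat (transpose C)) (mat 1) ** X
            ** hstack (cmat (transpose B) ** adj G) (mat 1)))) D
       = Re (finner (cmat (blkC D) ** G ** cmat B + cmat C ** G ** cmat (blkA D) ** G ** cmat B
                     + cmat C ** G ** cmat (blkB D)) X)"
proof -
  let ?U = "adj (cmat C ** G)" and ?W = "adj (G ** cmat B)"
  have U: "adj G ** cmat (transpose C) = ?U" and W: "cmat (transpose B) ** adj G = ?W"
    by (simp_all add: adj_mult adj_cmat)
  have "finner (cmat C ** G ** cmat (blkA D) ** G ** cmat B) X
      = finner ((cmat C ** G) ** cmat (blkA D) ** (G ** cmat B)) X"
    by (simp add: matrix_mul_assoc)
  also have "\<dots> = finner ((cmat C ** G) ** cmat (blkA D)) (X ** ?W)"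
    by (rule finner_mult_right)
  also have "\<dots> = finner (cmat (blkA D)) (?U ** X ** ?W)"
    by (simp add: finner_mult_left matrix_mul_assoc)
  finally have A: "Re (finner (cmat C ** G ** cmat (blkA D) ** G ** cmat B) X) = inner (blkA D) (remat (?U ** X ** ?W))"
    by (simp add: Re_finner_cmat)
  have B: "Re (finner (cmat C ** G ** cmat (blkB D)) X) = inner (blkB D) (remat (?U ** X))"
    by (simp add: finner_mult_left Re_finner_cmat)
  have C: "Re (finner (cmat (blkC D) ** G ** cmat B) X) = inner (blkC D) (remat (X ** ?W))"
    by (simp add: finner_mult_right Re_finner_cmat flip: matrix_mul_assoc)
  show ?thesis
    unfolding U W vstack_mult_hstack Pfrak_blk remat_blk inner_blk finner_add_left
    by (simp add: A B C inner_commute)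
qed

text \<open>\<open>G l\<close> stands for the resolvent \<open>G(i l)\<close>: \<open>cost_density\<close> is the integrand of \<open>4 pi V\<close> and
  \<open>grad_density\<close> that of \<open>2 pi\<close> times the gradient.\<close>

definition cost_density ::
  "(real \<Rightarrow> complex^'m^'r \<Rightarrow> complex^'m^'r) \<Rightarrow> (real \<Rightarrow> complex^'n^'n) \<Rightarrow> real^'m^'n \<Rightarrow> real^'n^'r
    \<Rightarrow> real \<Rightarrow> real" where
  "cost_density M G B C l = Re (finner (cmat C ** G l ** cmat B) (M l (cmat C ** G l ** cmat B)))"

definition grad_density ::
  "(real \<Rightarrow> complex^'m^'r \<Rightarrow> complex^'m^'r) \<Rightarrow> (real \<Rightarrow> complex^'n^'n) \<Rightarrow> real^'m^'n \<Rightarrow> real^'n^'r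
    \<Rightarrow> real \<Rightarrow> real^('n::finite+'m::finite)^('n+'r::finite)" where
  "grad_density M G B C l = remat (Pfrak (vstack (adj (G l) ** cmat (transpose C)) (mat 1)
      ** M l (cmat C ** G l ** cmat B) ** hstack (cmat (transpose B) ** adj (G l)) (mat 1)))"

lemma Vcost_eq:
  "Vcost M \<Gamma> = 1 / (4 * pi) * (LINT l|lborel.
     cost_density M (\<lambda>l. Gtf (blkA \<Gamma>) (\<i> * complex_of_real l)) (blkB \<Gamma>) (blkC \<Gamma>) l)"
  by (simp add: Vcost_def cost_density_def Ftf_def)

definition remainder_density ::
  "(real \<Rightarrow> complex^'m^'r \<Rightarrow> complex^'m^'r) \<Rightarrow> real^'n^'n \<Rightarrow> real^'m^'n \<Rightarrow> real^'n^'r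
    \<Rightarrow> real^('n::finite+'m::finite)^('n+'r::finite) \<Rightarrow> real \<Rightarrow> real" where
  "remainder_density M A B C \<Delta> l =
     cost_density M (\<lambda>l. Gtf (A + blkA \<Delta>) (\<i> * complex_of_real l)) (B + blkB \<Delta>) (C + blkC \<Delta>) l
     - cost_density M (\<lambda>l. Gtf A (\<i> * complex_of_real l)) B C l
     - 2 * inner (grad_density M (\<lambda>l. Gtf A (\<i> * complex_of_real l)) B C l) \<Delta>"

section \<open>Differentiability of the weighted cost\<close>

locale selfadjoint_weight =
  fixes M :: "real \<Rightarrow> complex^'m::finite^'r::finite \<Rightarrow> complex^'m^'r" and K :: real
  assumes M_add: "M l (X + Y) = M l X + M l Y"
    and M_scale: "M l (cscale c X) = cscale c (M l X)"
    and M_selfadj: "finner X (M l Y) = finner (M l X) Y"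
    and M_meas: "(\<lambda>l. M l X) \<in> borel_measurable lborel"
    and M_bdd: "norm (M l X) \<le> K * norm X"
    and K_nonneg: "K \<ge> 0"
begin

lemma M_additive: "Modules.additive (M l)"
  by unfold_locales (rule M_add)

lemma borel_measurable_M:
  assumes Y: "Y \<in> borel_measurable lborel"
  shows "(\<lambda>l. M l (Y l)) \<in> borel_measurable lborel"
proof -
  \<comment> \<open>Expanding \<open>Y l\<close> in matrix units reduces joint measurability to that of each \<open>\<lambda>l. M l X\<close>.\<close>
  have "M l (Y l) = (\<Sum>i\<in>UNIV. \<Sum>j\<in>UNIV. cscale (Y l $ i $ j) (M l (axis i (axis j 1))))" for l
    by (subst matrix_axis_expansion[of "Y l"]) (simp add: additive.sum[OF M_additive] M_scale)
  moreover have "(\<lambda>l. cscale (Y l $ i $ j) (M l (axis i (axis j 1)))) \<in> borel_measurable lborel" for i j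
    by (intro borel_measurable_continuous_Pair[OF _ _ continuous_cscale]
        borel_measurable_matrix_entry Y M_meas)
  ultimately show ?thesis by simp
qed

lemma Re_finner_M_commute: "Re (finner X (M l Y)) = Re (finner Y (M l X))"
  by (simp add: M_selfadj finner_commute[of "M l X" Y])

lemma abs_Re_finner_M_le: "\<bar>Re (finner X (M l Y))\<bar> \<le> K * (norm X * norm Y)"
proof -
  have "\<bar>Re (finner X (M l Y))\<bar> \<le> norm X * norm (M l Y)"
    by (rule order_trans[OF abs_Re_le_cmod norm_finner_le])
  also have "\<dots> \<le> norm X * (K * norm Y)" by (intro mult_left_mono M_bdd) simp
  finally show ?thesis by (simp add: mult_ac)
qed

lemma Re_finner_M_second_order:
  "\<bar>Re (finner (F + D) (M l (F + D))) - Re (finner F (M l F)) - 2 * Re (finner L (M l F))\<bar>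
     \<le> K * (2 * (norm (D - L) * norm F) + norm D * norm D)"
proof -
  have "Re (finner (F + D) (M l (F + D))) - Re (finner F (M l F)) - 2 * Re (finner L (M l F))
      = 2 * Re (finner (D - L) (M l F)) + Re (finner D (M l D))"
  proof -
    have "finner (F + D) (M l (F + D))
        = finner F (M l F) + finner D (M l F) + (finner F (M l D) + finner D (M l D))"
      by (simp only: M_add finner_add_left finner_add_right)
    then show ?thesis
      using Re_finner_M_commute[of F l D] by (simp add: finner_diff_left)
  qed
  then show ?thesis
    using abs_Re_finner_M_le[of "D - L" l F] abs_Re_finner_M_le[of D l D]
    by (simp add: algebra_simps)
qed

lemma integrable_cost_density:
  assumes G: "continuous_on UNIV G" and decay: "\<And>l. norm (G l) \<le> c / (1 + \<bar>l\<bar>)"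
  shows "integrable lborel (cost_density M G B C)"
proof (rule integrable_square_decay(1))
  define F where "F l = cmat C ** G l ** cmat B" for l
  have F: "F \<in> borel_measurable lborel"
    unfolding F_def measurable_lborel2 by (intro borel_measurable_continuous_onI continuous_intros G)
  show "cost_density M G B C \<in> borel_measurable lborel"
    unfolding cost_density_def F_def[symmetric]
    by (intro borel_measurable_continuous_Pair[where H="\<lambda>X Y. Re (finner X Y)"] F borel_measurable_M)
       (intro continuous_intros)
  fix l
  have nF: "norm (F l) \<le> norm C * (c / (1 + \<bar>l\<bar>)) * norm B"
    unfolding F_def using decay[of l] by (intro norm_matrix_mult_le_mult) (auto simp: norm_cmat)
  have "c \<ge> 0" using decay[of 0] by (auto intro: order_trans[OF norm_ge_zero])
  then have sq: "norm (F l) * norm (F l) \<le> (norm C * norm B * c)\<^sup>2 / (1 + \<bar>l\<bar>)\<^sup>2"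
    using mult_mono[OF nF nF] by (simp add: power2_eq_square field_simps)
  have "K * (norm (F l) * norm (F l)) \<le> K * (norm C * norm B * c)\<^sup>2 / (1 + \<bar>l\<bar>)\<^sup>2"
    using mult_left_mono[OF sq K_nonneg] by simp
  then show "norm (cost_density M G B C l) \<le> K * (norm C * norm B * c)\<^sup>2 / (1 + \<bar>l\<bar>)\<^sup>2"
    using abs_Re_finner_M_le[of "F l" l "F l"] unfolding cost_density_def F_def[symmetric] by simp
qed

lemma grad_density_blk:
  "grad_density M G B C l = blk (remat (adj (G l) ** cmat (transpose C) ** M l (cmat C ** G l ** cmat B)
      ** (cmat (transpose B) ** adj (G l)))) (remat (adj (G l) ** cmat (transpose C) ** M l (cmat C ** G l ** cmat B)))
      (remat (M l (cmat C ** G l ** cmat B) ** (cmat (transpose B) ** adj (G l)))) 0"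
  by (simp add: grad_density_def vstack_mult_hstack Pfrak_blk remat_blk)

lemma integrable_grad_density:
  assumes G: "continuous_on UNIV G" and decay: "\<And>l. norm (G l) \<le> c / (1 + \<bar>l\<bar>)"
  shows "integrable lborel (grad_density M G B C)"
proof (rule integrable_square_decay(1))
  define F where "F l = cmat C ** G l ** cmat B" for l
  have F: "F \<in> borel_measurable lborel"
    unfolding F_def measurable_lborel2 by (intro borel_measurable_continuous_onI continuous_intros G)
  have Gm: "G \<in> borel_measurable lborel"
    using G by (simp add: measurable_lborel2 borel_measurable_continuous_onI)
  show "grad_density M G B C \<in> borel_measurable lborel"
    unfolding grad_density_def F_def[symmetric]
    by (intro borel_measurable_continuous_Pair[where H="\<lambda>G X. remat (Pfrak (vstack (adj G ** cmat (transpose C)) (mat 1)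
          ** X ** hstack (cmat (transpose B) ** adj G) (mat 1)))"]
        borel_measurable_M F Gm)
       (intro continuous_intros)
  fix l
  let ?g = "c / (1 + \<bar>l\<bar>)"
  have "c \<ge> 0" using decay[of 0] by (auto intro: order_trans[OF norm_ge_zero])
  then have g: "?g \<le> c" by (rule divide_one_plus_abs_le)
  let ?U = "adj (G l) ** cmat (transpose C)" and ?W = "cmat (transpose B) ** adj (G l)"
    and ?X = "M l (F l)"
  have U: "norm ?U \<le> ?g * norm C" and W: "norm ?W \<le> norm B * ?g"
    by (intro norm_matrix_mult_le_mult; simp add: norm_adj norm_cmat_transpose decay)+
  have U': "norm ?U \<le> c * norm C"
    using U mult_right_mono[OF g norm_ge_zero[of C]] by linarith
  have nF: "norm (F l) \<le> norm C * ?g * norm B"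
    unfolding F_def using decay[of l] by (intro norm_matrix_mult_le_mult) (auto simp: norm_cmat)
  have X: "norm ?X \<le> K * (norm C * ?g * norm B)"
    by (rule order_trans[OF M_bdd mult_left_mono[OF nF K_nonneg]])
  have "norm (grad_density M G B C l) \<le> norm (?U ** ?X ** ?W) + norm (?U ** ?X) + norm (?X ** ?W)"
    using norm_blk_le[of "remat (?U ** ?X ** ?W)" "remat (?U ** ?X)" "remat (?X ** ?W)" 0]
      norm_remat_le[of "?U ** ?X ** ?W"] norm_remat_le[of "?U ** ?X"] norm_remat_le[of "?X ** ?W"]
    by (simp add: grad_density_blk F_def)
  also have "\<dots> \<le> c * norm C * (K * (norm C * ?g * norm B)) * (norm B * ?g)
      + ?g * norm C * (K * (norm C * ?g * norm B)) + K * (norm C * ?g * norm B) * (norm B * ?g)"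
    by (intro add_mono norm_matrix_mult_le_mult U U' W X order_refl)
  also have "\<dots> = K * norm C * norm B * (c * norm C * norm B + norm C + norm B) * c\<^sup>2 / (1 + \<bar>l\<bar>)\<^sup>2"
    by (simp add: power2_eq_square algebra_simps add_divide_distrib)
  finally show "norm (grad_density M G B C l)
      \<le> K * norm C * norm B * (c * norm C * norm B + norm C + norm B) * c\<^sup>2 / (1 + \<bar>l\<bar>)\<^sup>2" .
qed

lemma transfer_second_order_bound:
  fixes G Gp dA :: "complex^'n^'n" and B dB :: "complex^'m^'n" and C dC :: "complex^'n^'r"
  assumes Gp: "Gp = G + Gp ** dA ** G"
    and G: "norm G \<le> g" "norm Gp \<le> 2 * g" "g \<le> \<rho>"
    and t: "norm dA \<le> t" "norm dB \<le> t" "norm dC \<le> t" "t \<le> 1"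
    and BC: "norm B + 1 \<le> \<rho>" "norm C \<le> \<rho>"
  shows "\<bar>Re (finner ((C + dC) ** Gp ** (B + dB)) (M l ((C + dC) ** Gp ** (B + dB))))
          - Re (finner (C ** G ** B) (M l (C ** G ** B)))
          - 2 * Re (finner (dC ** G ** B + C ** G ** dA ** G ** B + C ** G ** dB) (M l (C ** G ** B)))\<bar>
       \<le> K * (8 * \<rho>^6 + 20 * \<rho>^4 + 11 * \<rho>\<^sup>2) * (t * g)\<^sup>2"
proof -
  define F where "F = C ** G ** B"
  define L where "L = dC ** G ** B + C ** G ** dA ** G ** B + C ** G ** dB"
  define D where "D = (C + dC) ** Gp ** (B + dB) - F"
  have g: "g \<ge> 0" and t0: "t \<ge> 0" using G t by (auto intro: order_trans[OF norm_ge_zero])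
  have \<rho>: "\<rho> \<ge> 0" using BC norm_ge_zero[of C] by linarith
  have nF: "norm F \<le> \<rho> * g * \<rho>"
    unfolding F_def using G BC by (intro norm_matrix_mult_le_mult) auto
  have nD: "norm D \<le> t * g * (3 * \<rho> + 2 * \<rho>^3)"
    unfolding D_def F_def by (rule norm_transfer_perturbation_le(1)[OF assms])
  have nDL: "norm (D - L) \<le> t * t * g * (4 * \<rho>\<^sup>2 + 1 + 2 * \<rho>^4)"
    unfolding D_def F_def L_def by (rule norm_transfer_perturbation_le(2)[OF assms])
  have "\<bar>Re (finner (F + D) (M l (F + D))) - Re (finner F (M l F)) - 2 * Re (finner L (M l F))\<bar>
      \<le> K * (2 * (norm (D - L) * norm F) + norm D * norm D)"
    by (rule Re_finner_M_second_order)
  also have "\<dots> \<le> K * (2 * ((t * t * g * (4 * \<rho>\<^sup>2 + 1 + 2 * \<rho>^4)) * (\<rho> * g * \<rho>))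
      + (t * g * (3 * \<rho> + 2 * \<rho>^3)) * (t * g * (3 * \<rho> + 2 * \<rho>^3)))"
    using g t0 \<rho> by (intro mult_left_mono add_mono mult_mono nDL nF nD K_nonneg order_refl) auto
  also have "\<dots> = K * (8 * \<rho>^6 + 20 * \<rho>^4 + 11 * \<rho>\<^sup>2) * (t * g)\<^sup>2"
    by algebra
  finally show ?thesis by (simp add: F_def L_def D_def)
qed

lemma abs_remainder_density_le:
  fixes A :: "real^'n^'n" and B :: "real^'m^'n" and C :: "real^'n^'r" and \<Delta> :: "real^('n+'m)^('n+'r)"
  assumes inv: "\<And>l. invertible (mat (\<i> * complex_of_real l) - cmat A)"
    and decay: "\<And>l. norm (Gtf A (\<i> * complex_of_real l)) \<le> c / (1 + \<bar>l\<bar>)"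
    and small: "c * norm \<Delta> \<le> 1/2" "norm \<Delta> \<le> 1"
  defines "\<rho> \<equiv> norm B + norm C + c + 1"
  shows "\<bar>remainder_density M A B C \<Delta> l\<bar>
       \<le> K * (8 * \<rho>^6 + 20 * \<rho>^4 + 11 * \<rho>\<^sup>2) * c\<^sup>2 * (norm \<Delta>)\<^sup>2 / (1 + \<bar>l\<bar>)\<^sup>2"
proof -
  let ?G = "Gtf A (\<i> * complex_of_real l)" and ?g = "c / (1 + \<bar>l\<bar>)" and ?t = "norm \<Delta>"
  have "c \<ge> 0" using decay[of 0] by (auto intro: order_trans[OF norm_ge_zero])
  then have g: "?g \<le> c" by (rule divide_one_plus_abs_le)
  then have g_le: "?g \<le> \<rho>" using norm_ge_zero[of B] norm_ge_zero[of C] unfolding \<rho>_def by linarith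
  have dA: "norm (cmat (blkA \<Delta>)) \<le> ?t" and dB: "norm (cmat (blkB \<Delta>)) \<le> ?t"
    and dC: "norm (cmat (blkC \<Delta>)) \<le> ?t"
    by (simp_all add: norm_cmat norm_blkA_le norm_blkB_le norm_blkC_le)
  have "c * norm (blkA \<Delta>) \<le> 1/2"
    using mult_left_mono[OF norm_blkA_le[of \<Delta>] \<open>c \<ge> 0\<close>] small by linarith
  note pert = resolvent_imag_perturb[OF inv decay this]
  have "\<bar>Re (finner ((cmat C + cmat (blkC \<Delta>)) ** Gtf (A + blkA \<Delta>) (\<i> * complex_of_real l) ** (cmat B + cmat (blkB \<Delta>)))
            (M l ((cmat C + cmat (blkC \<Delta>)) ** Gtf (A + blkA \<Delta>) (\<i> * complex_of_real l) ** (cmat B + cmat (blkB \<Delta>)))))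
        - Re (finner (cmat C ** ?G ** cmat B) (M l (cmat C ** ?G ** cmat B)))
        - 2 * Re (finner (cmat (blkC \<Delta>) ** ?G ** cmat B + cmat C ** ?G ** cmat (blkA \<Delta>) ** ?G ** cmat B
                    + cmat C ** ?G ** cmat (blkB \<Delta>)) (M l (cmat C ** ?G ** cmat B)))\<bar>
      \<le> K * (8 * \<rho>^6 + 20 * \<rho>^4 + 11 * \<rho>\<^sup>2) * (?t * ?g)\<^sup>2"
    using decay[of l] pert(3) g_le dA dB dC small \<open>c \<ge> 0\<close>
    by (intro transfer_second_order_bound pert(2)) (auto simp: \<rho>_def norm_cmat)
  then show ?thesis
    unfolding remainder_density_def cost_density_def grad_density_def inner_grad_block_eq cmat_add
    by (simp add: power_divide power_mult_distrib mult_ac)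
qed

lemma Vcost_remainder_integral:
  fixes A :: "real^'n^'n" and B :: "real^'m^'n" and C :: "real^'n^'r" and \<Delta> :: "real^('n+'m)^('n+'r)"
  assumes inv: "\<And>l. invertible (mat (\<i> * complex_of_real l) - cmat A)"
    and decay: "\<And>l. norm (Gtf A (\<i> * complex_of_real l)) \<le> c / (1 + \<bar>l\<bar>)"
    and small: "c * norm (blkA \<Delta>) \<le> 1/2"
  shows "integrable lborel (remainder_density M A B C \<Delta>)"
    and "Vcost M (blk A B C 0 + \<Delta>) - Vcost M (blk A B C 0)
           - inner ((1 / (2 * pi)) *\<^sub>R (LINT l|lborel. grad_density M (\<lambda>l. Gtf A (\<i> * complex_of_real l)) B C l)) \<Delta>
         = 1 / (4 * pi) * integral\<^sup>L lborel (remainder_density M A B C \<Delta>)"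
proof -
  let ?G0 = "\<lambda>l. Gtf A (\<i> * complex_of_real l)" and ?G1 = "\<lambda>l. Gtf (A + blkA \<Delta>) (\<i> * complex_of_real l)"
  note pert = resolvent_imag_perturb[OF inv decay small]
  note G0 = continuous_on_resolvent_imag[OF inv] decay
  note G1 = continuous_on_resolvent_imag[OF pert(1)] pert(3)
  note int0 = integrable_cost_density[OF G0, of B C]
  note intR = integrable_grad_density[OF G0, of B C]
  note int1 = integrable_cost_density[OF G1, of "B + blkB \<Delta>" "C + blkC \<Delta>"]
  show "integrable lborel (remainder_density M A B C \<Delta>)"
    unfolding remainder_density_def[abs_def] using int0 int1 intR by simp
  have Iq: "integral\<^sup>L lborel (remainder_density M A B C \<Delta>)
      = integral\<^sup>L lborel (cost_density M ?G1 (B + blkB \<Delta>) (C + blkC \<Delta>))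
        - integral\<^sup>L lborel (cost_density M ?G0 B C) - 2 * inner (integral\<^sup>L lborel (grad_density M ?G0 B C)) \<Delta>"
    unfolding remainder_density_def[abs_def] using int0 int1 intR by simp
  show "Vcost M (blk A B C 0 + \<Delta>) - Vcost M (blk A B C 0)
      - inner ((1 / (2 * pi)) *\<^sub>R (LINT l|lborel. grad_density M ?G0 B C l)) \<Delta>
      = 1 / (4 * pi) * integral\<^sup>L lborel (remainder_density M A B C \<Delta>)"
    unfolding Iq by (simp add: Vcost_eq blkA_add blkB_add blkC_add field_simps)
qed

lemma Vcost_quadratic_remainder:
  fixes A :: "real^'n^'n" and B :: "real^'m^'n" and C :: "real^'n^'r"
  assumes inv: "\<And>l. invertible (mat (\<i> * complex_of_real l) - cmat A)"
    and decay: "\<And>l. norm (Gtf A (\<i> * complex_of_real l)) \<le> c / (1 + \<bar>l\<bar>)"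
  obtains Q where "\<And>\<Delta>. c * norm \<Delta> \<le> 1/2 \<Longrightarrow> norm \<Delta> \<le> 1 \<Longrightarrow>
    \<bar>Vcost M (blk A B C 0 + \<Delta>) - Vcost M (blk A B C 0)
      - inner ((1 / (2 * pi)) *\<^sub>R (LINT l|lborel. grad_density M (\<lambda>l. Gtf A (\<i> * complex_of_real l)) B C l)) \<Delta>\<bar>
    \<le> Q * (norm \<Delta>)\<^sup>2"
proof
  fix \<Delta> :: "real^('n+'m)^('n+'r)"
  assume small: "c * norm \<Delta> \<le> 1/2" "norm \<Delta> \<le> 1"
  define \<rho> where "\<rho> = norm B + norm C + c + 1"
  have "c \<ge> 0" using decay[of 0] by (auto intro: order_trans[OF norm_ge_zero])
  then have "c * norm (blkA \<Delta>) \<le> 1/2"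
    using mult_left_mono[OF norm_blkA_le[of \<Delta>] \<open>c \<ge> 0\<close>] small by linarith
  note q = Vcost_remainder_integral[OF inv decay this, of B C]
  have "norm (integral\<^sup>L lborel (remainder_density M A B C \<Delta>))
      \<le> K * (8 * \<rho>^6 + 20 * \<rho>^4 + 11 * \<rho>\<^sup>2) * c\<^sup>2 * (norm \<Delta>)\<^sup>2 * pi"
    using abs_remainder_density_le[OF inv decay small] unfolding \<rho>_def
    by (intro integrable_square_decay(2) borel_measurable_integrable[OF q(1)]) simp
  then show "\<bar>Vcost M (blk A B C 0 + \<Delta>) - Vcost M (blk A B C 0)
      - inner ((1 / (2 * pi)) *\<^sub>R (LINT l|lborel. grad_density M (\<lambda>l. Gtf A (\<i> * complex_of_real l)) B C l)) \<Delta>\<bar>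
    \<le> K * (8 * \<rho>^6 + 20 * \<rho>^4 + 11 * \<rho>\<^sup>2) * c\<^sup>2 / 4 * (norm \<Delta>)\<^sup>2"
    unfolding q(2) by (simp add: abs_mult divide_le_eq mult_ac)
qed

lemma Vcost_has_derivative:
  fixes A :: "real^'n^'n" and B :: "real^'m^'n" and C :: "real^'n^'r"
  assumes "hurwitz A"
  shows "(Vcost M has_derivative (\<lambda>H. inner ((1 / (2 * pi)) *\<^sub>R
      (LINT l|lborel. grad_density M (\<lambda>l. Gtf A (\<i> * complex_of_real l)) B C l)) H)) (at (blk A B C 0))"
proof -
  note inv = invertible_imag_pencil[OF assms]
  obtain c where c: "c > 0" and decay: "\<And>l. norm (Gtf A (\<i> * complex_of_real l)) \<le> c / (1 + \<bar>l\<bar>)"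
    using resolvent_imag_decay[OF inv] by blast
  obtain Q where Q: "\<And>\<Delta>. c * norm \<Delta> \<le> 1/2 \<Longrightarrow> norm \<Delta> \<le> 1 \<Longrightarrow>
      \<bar>Vcost M (blk A B C 0 + \<Delta>) - Vcost M (blk A B C 0)
        - inner ((1 / (2 * pi)) *\<^sub>R (LINT l|lborel. grad_density M (\<lambda>l. Gtf A (\<i> * complex_of_real l)) B C l)) \<Delta>\<bar>
      \<le> Q * (norm \<Delta>)\<^sup>2"
    using Vcost_quadratic_remainder[OF inv decay] by blast
  show ?thesis
  proof (rule has_derivative_quadratic_remainder)
    show "min 1 (1 / (2 * c)) > 0" using c by simp
    fix \<Gamma> assume "norm (\<Gamma> - blk A B C 0) < min 1 (1 / (2 * c))"
    then have "c * norm (\<Gamma> - blk A B C 0) \<le> 1/2" "norm (\<Gamma> - blk A B C 0) \<le> 1"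
      using c by (auto simp: field_simps)
    from Q[OF this] show "norm (Vcost M \<Gamma> - Vcost M (blk A B C 0) - inner ((1 / (2 * pi)) *\<^sub>R
        (LINT l|lborel. grad_density M (\<lambda>l. Gtf A (\<i> * complex_of_real l)) B C l)) (\<Gamma> - blk A B C 0))
      \<le> Q * (norm (\<Gamma> - blk A B C 0))\<^sup>2"
      by simp
  qed (rule bounded_linear_inner_right)
qed

end

theorem lemma6p1:
  fixes M :: "real \<Rightarrow> complex^'m^'r \<Rightarrow> complex^'m^'r"
    and A :: "real^'n^'n" and B :: "real^'m^'n" and C :: "real^'n^'r"
  assumes M_add: "\<And>l X Y. M l (X + Y) = M l X + M l Y"
    and M_scale: "\<And>l c X. M l (cscale c X) = cscale c (M l X)"
    and M_selfadj: "\<And>l X Y. finner X (M l Y) = finner (M l X) Y"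
    and M_meas: "\<And>X. (\<lambda>l. M l X) \<in> borel_measurable lborel"
    and M_bdd: "\<exists>K. \<forall>l X. norm (M l X) \<le> K * norm X"
    and hurw: "hurwitz A"
  shows
    "integrable lborel (\<lambda>l. Re (finner (Ftf A B C (\<i> * complex_of_real l))
                                       (M l (Ftf A B C (\<i> * complex_of_real l)))))
     \<and> integrable lborel (\<lambda>l. remat (Pfrak
          (vstack (adj (Gtf A (\<i> * complex_of_real l)) ** cmat (transpose C)) (mat 1)
           ** M l (Ftf A B C (\<i> * complex_of_real l))
           ** hstack (cmat (transpose B) ** adj (Gtf A (\<i> * complex_of_real l))) (mat 1))))
     \<and> (Vcost M has_derivative
          (\<lambda>H. inner ((1 / (2 * pi)) *\<^sub>R (LINT l|lborel. remat (Pfrak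
             (vstack (adj (Gtf A (\<i> * complex_of_real l)) ** cmat (transpose C)) (mat 1)
              ** M l (Ftf A B C (\<i> * complex_of_real l))
              ** hstack (cmat (transpose B) ** adj (Gtf A (\<i> * complex_of_real l))) (mat 1))))) H))
        (at (blk A B C 0) within zeroBR)"
proof -
  obtain K0 where K0: "\<forall>l X. norm (M l X) \<le> K0 * norm X" using M_bdd by blast
  have "norm (M l X) \<le> max K0 0 * norm X" for l X
    using K0 mult_right_mono[of K0 "max K0 0" "norm X"] by (meson max.cobounded1 norm_ge_zero order_trans)
  then interpret selfadjoint_weight M "max K0 0"
    using M_add M_scale M_selfadj M_meas by unfold_locales auto
  have inv: "\<And>l. invertible (mat (\<i> * complex_of_real l) - cmat A)"
    by (rule invertible_imag_pencil[OF hurw])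
  obtain c where "\<And>l. norm (Gtf A (\<i> * complex_of_real l)) \<le> c / (1 + \<bar>l\<bar>)"
    using resolvent_imag_decay[OF inv] by blast
  note G = continuous_on_resolvent_imag[OF inv] this
  \<comment> \<open>\<open>Vcost\<close> ignores the bottom-right block, so the derivative exists in the whole space.\<close>
  show ?thesis
    using integrable_cost_density[OF G, of B C] integrable_grad_density[OF G, of B C]
      Vcost_has_derivative[OF hurw, of B C]
    by (simp add: has_derivative_at_withinI cost_density_def[abs_def] grad_density_def[abs_def] Ftf_def)
qed

end
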